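(* Let $q\in\mathbb{C}^*$ with $|q|>1$. For all integers $n\geq0$, $$\frac{n+1}{(q;q)_{n+1}}=-\sum_{k=0}^{n}\frac{1}{(q^{k+1}-1)(q;q)_{n-k}}.$$
   Context: $(q;q)_0=1$ and $(q;q)_n=\prod_{k=1}^n(1-q^k)$ for $n\geq1$. *)

theory Defs
  imports Complex_Main
begin

definition qpoch :: "complex \<Rightarrow> nat \<Rightarrow> complex" where
  "qpoch q n = (\<Prod>k=1..n. 1 - q ^ k)"

end

theory Submission
  imports Defs
begin

text \<open>
  Write P(m) for (q;q)_m and S(n) for qpoch_conv_sum q n, i.e.
  sum_{k=0..n} 1 / ((1 - q^(k+1)) P(n-k)), which is minus the right-hand side.
  Splitting 1 - q^(n+2) = (1 - q^(n+1-k)) + q^(n+1-k) (1 - q^(k+1)) in each term of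
  (1 - q^(n+2)) S(n+1) yields S(n) plus the telescoping sum
  sum_{j=0..n+1} q^j / P(j) = 1 / P(n+1).
  The hypothesis |q| > 1 only serves to make q not a root of unity.
\<close>

lemma qpoch_Suc: "qpoch q (Suc n) = qpoch q n * (1 - q ^ Suc n)"
  unfolding qpoch_def by (simp add: prod.nat_ivl_Suc')

lemma power_neq_one_if_norm_gt_one:
  fixes q :: "'a :: real_normed_div_algebra"
  assumes "norm q > 1" and "0 < k"
  shows "q ^ k \<noteq> 1"
proof
  assume "q ^ k = 1"
  moreover have "norm (q ^ k) > 1"
    using assms by (simp add: norm_power one_less_power)
  ultimately show False by simp
qed

lemma qpoch_nonzero:
  assumes "\<And>k. 0 < k \<Longrightarrow> q ^ k \<noteq> 1"
  shows "qpoch q n \<noteq> 0"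
  using assms unfolding qpoch_def by (auto simp: prod_zero_iff)

lemma sum_power_div_qpoch:
  assumes "\<And>k. 0 < k \<Longrightarrow> q ^ k \<noteq> 1"
  shows "(\<Sum>j=0..n. q ^ j / qpoch q j) = 1 / qpoch q n"
proof (induction n)
  case 0
  then show ?case by (simp add: qpoch_def)
next
  case (Suc n)
  have "1 - q ^ Suc n \<noteq> 0" "qpoch q n \<noteq> 0"
    using assms[of "Suc n"] qpoch_nonzero[OF assms] by auto
  with Suc show ?case by (simp add: qpoch_Suc field_simps)
qed

definition qpoch_conv_sum :: "complex \<Rightarrow> nat \<Rightarrow> complex" where
  "qpoch_conv_sum q n = (\<Sum>k=0..n. 1 / ((1 - q ^ (k + 1)) * qpoch q (n - k)))"

lemma qpoch_conv_sum_Suc: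
  assumes not_root: "\<And>k. 0 < k \<Longrightarrow> q ^ k \<noteq> 1"
  shows "(1 - q ^ (n + 2)) * qpoch_conv_sum q (Suc n)
           = qpoch_conv_sum q n + 1 / qpoch q (Suc n)"
proof -
  have split_term: "(1 - q ^ (n + 2)) / ((1 - q ^ (k + 1)) * qpoch q (Suc n - k))
      = (1 - q ^ (Suc n - k)) / ((1 - q ^ (k + 1)) * qpoch q (Suc n - k))
        + q ^ (Suc n - k) / qpoch q (Suc n - k)" if "k \<le> Suc n" for k
  proof -
    have "1 - q ^ (k + 1) \<noteq> 0" "qpoch q (Suc n - k) \<noteq> 0"
      using not_root[of "k + 1"] qpoch_nonzero[OF not_root] by auto
    moreover have "q ^ (n + 2) = q ^ (Suc n - k) * q ^ (k + 1)"
      using that by (simp flip: power_add)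
    ultimately show ?thesis by (simp only:) (simp add: field_simps)
  qed
  have shift_term: "(1 - q ^ (Suc n - k)) / ((1 - q ^ (k + 1)) * qpoch q (Suc n - k))
      = 1 / ((1 - q ^ (k + 1)) * qpoch q (n - k))" if "k \<le> n" for k
  proof -
    have "Suc n - k = Suc (n - k)" using that by simp
    moreover have "1 - q ^ Suc (n - k) \<noteq> 0" using not_root[of "Suc (n - k)"] by simp
    ultimately show ?thesis by (simp add: qpoch_Suc)
  qed
  have "(1 - q ^ (n + 2)) * qpoch_conv_sum q (Suc n)
      = (\<Sum>k=0..Suc n. (1 - q ^ (Suc n - k)) / ((1 - q ^ (k + 1)) * qpoch q (Suc n - k)))
        + (\<Sum>k=0..Suc n. q ^ (Suc n - k) / qpoch q (Suc n - k))"
    unfolding qpoch_conv_sum_def sum_distrib_left sum.distrib[symmetric]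
    by (intro sum.cong refl) (simp only: times_divide_eq_right mult_1_right split_term atLeastAtMost_iff)
  also have "(\<Sum>k=0..Suc n. (1 - q ^ (Suc n - k)) / ((1 - q ^ (k + 1)) * qpoch q (Suc n - k)))
      = qpoch_conv_sum q n"
    using shift_term by (simp add: qpoch_conv_sum_def)
  also have "(\<Sum>k=0..Suc n. q ^ (Suc n - k) / qpoch q (Suc n - k))
      = (\<Sum>j=0..Suc n. q ^ j / qpoch q j)"
    by (subst sum.atLeastAtMost_rev) simp
  also have "\<dots> = 1 / qpoch q (Suc n)"
    by (rule sum_power_div_qpoch[OF not_root])
  finally show ?thesis .
qed

lemma qpoch_conv_sum_eq:
  assumes not_root: "\<And>k. 0 < k \<Longrightarrow> q ^ k \<noteq> 1"
  shows "qpoch_conv_sum q n = of_nat (n + 1) / qpoch q (n + 1)"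
proof (induction n)
  case 0
  then show ?case by (simp add: qpoch_conv_sum_def qpoch_def)
next
  case (Suc n)
  have nonzero: "1 - q ^ (n + 2) \<noteq> 0" "qpoch q (Suc n) \<noteq> 0"
    using not_root[of "n + 2"] qpoch_nonzero[OF not_root] by auto
  have "(1 - q ^ (n + 2)) * qpoch_conv_sum q (Suc n) = of_nat (n + 2) / qpoch q (Suc n)"
    using qpoch_conv_sum_Suc[OF not_root, of n] Suc by (simp add: add_divide_distrib)
  with nonzero show ?case
    by (simp add: qpoch_Suc[of q "Suc n"] field_simps)
qed

theorem lemma2p8:
  fixes q :: complex and n :: nat
  assumes "q \<noteq> 0" and "norm q > 1"
  shows "of_nat (n + 1) / qpoch q (n + 1)
           = - (\<Sum>k=0..n. 1 / ((q ^ (k + 1) - 1) * qpoch q (n - k)))"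
proof -
  have "- (\<Sum>k=0..n. 1 / ((q ^ (k + 1) - 1) * qpoch q (n - k))) = qpoch_conv_sum q n"
    unfolding qpoch_conv_sum_def sum_negf[symmetric]
    by (intro sum.cong refl)
      (simp only: minus_diff_eq[of 1, symmetric] mult_minus_left divide_minus_right minus_minus)
  moreover have "\<And>k. 0 < k \<Longrightarrow> q ^ k \<noteq> 1"
    using power_neq_one_if_norm_gt_one[OF assms(2)] .
  ultimately show ?thesis
    using qpoch_conv_sum_eq by simp
qed

end
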